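(* Let $\mathbf{S}$ be a distributive meet semilattice, $n\ge1$ an integer and $F$ an upset of $\mathbf{S}$. The following are equivalent: (i) $F$ is a prime $n$-filter; (ii) $F$ is a prime upset which is a union of at most $n$ filters; (iii) $F$ is a prime upset and there is a meet-semilattice homomorphism $h\colon\mathbf{S}\to\mathbf{2}^n$ with $F=h^{-1}[P_n]$, where $\mathbf{2}^n$ is the Boolean lattice with $n$ atoms and $P_n$ its set of non-zero elements.
   Context: A meet semilattice is distributive if whenever $x\wedge y\le z$ there are $x'\ge x$, $y'\ge y$ with $x'\wedge y'=z$. For a set $X$, $Y\subseteq_n X$ means $Y$ is a non-empty subset of $X$ with $|Y|\le n$. An $n$-filter on $\mathbf{S}$ is an upset $F$ such that for every non-empty finite $X\subseteq F$: if $\bigwedge Y\in F$ for every $Y\subseteq_n X$ then $\bigwedge X\in F$; a filter is a $1$-filter (possibly empty or total). An upset $F$ of $\mathbf{S}$ is prime if its complement $\mathbf{S}\setminus F$ is upward directed, i.e. any two elements outside $F$ have a common upper bound outside $F$ (the empty complement counts). A prime $n$-filter is an $n$-filter which is a prime upset (equivalently, a meet-prime element of the lattice of $n$-filters on $\mathbf{S}$). *)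

theory Defs
  imports Main
begin

text \<open>A meet semilattice is modelled by the type class semilattice_inf (the whole
type is the carrier S). Finite meets are Inf_fin.\<close>

definition distributive_msl :: "('a::semilattice_inf) itself \<Rightarrow> bool" where
  "distributive_msl _ \<longleftrightarrow>
     (\<forall>x y z::'a. inf x y \<le> z \<longrightarrow> (\<exists>x' y'. x \<le> x' \<and> y \<le> y' \<and> inf x' y' = z))"

definition upset :: "('a::order) set \<Rightarrow> bool" where
  "upset F \<longleftrightarrow> (\<forall>x y. x \<in> F \<longrightarrow> x \<le> y \<longrightarrow> y \<in> F)"

definition n_filter :: "nat \<Rightarrow> ('a::semilattice_inf) set \<Rightarrow> bool" where
  "n_filter n F \<longleftrightarrow> upset F \<and>
     (\<forall>X. X \<noteq> {} \<and> finite X \<and> X \<subseteq> F \<longrightarrow>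
        (\<forall>Y. Y \<noteq> {} \<and> Y \<subseteq> X \<and> card Y \<le> n \<longrightarrow> Inf_fin Y \<in> F) \<longrightarrow> Inf_fin X \<in> F)"

definition filter_msl :: "('a::semilattice_inf) set \<Rightarrow> bool" where
  "filter_msl F \<longleftrightarrow> n_filter 1 F"

definition prime_upset :: "('a::order) set \<Rightarrow> bool" where
  "prime_upset F \<longleftrightarrow> upset F \<and>
     (\<forall>a b. a \<notin> F \<longrightarrow> b \<notin> F \<longrightarrow> (\<exists>c. a \<le> c \<and> b \<le> c \<and> c \<notin> F))"

definition prime_n_filter :: "nat \<Rightarrow> ('a::semilattice_inf) set \<Rightarrow> bool" where
  "prime_n_filter n F \<longleftrightarrow> n_filter n F \<and> prime_upset F"

text \<open>The Boolean lattice 2^n is represented as the subsets of {..<n}; a meet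
homomorphism into it maps meets to intersections; P_n is the set of non-empty elements.\<close>

definition msl_hom_2n :: "nat \<Rightarrow> (('a::semilattice_inf) \<Rightarrow> nat set) \<Rightarrow> bool" where
  "msl_hom_2n n h \<longleftrightarrow> (\<forall>x. h x \<subseteq> {..<n}) \<and> (\<forall>x y. h (inf x y) = h x \<inter> h y)"

end

theory Submission
  imports Defs
begin

(*
  (i) \<Longrightarrow> (ii): take a largest finite A \<subseteq> F whose pairwise meets lie outside F.
  Such sets have at most n elements: otherwise primeness puts all pairwise meets below
  some c \<notin> F, and distributivity yields elements y a \<ge> A - {a} with meet below c; every
  n of the y a lie above a common element of A, so the n-filter property would put
  their meet into F.  By maximality of A, each {x. inf x a \<in> F} with a \<in> A is a filter,
  and these filters cover F.
  (ii) \<Longrightarrow> (i): if Inf_fin X \<notin> F, choose for each of the at most n filters an element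
  of X outside it; the meet of the chosen elements lies in one of the filters, yet below
  the element chosen for it.
  (ii) \<Longleftrightarrow> (iii): k \<le> n filters G i correspond to the meet homomorphism x \<mapsto> {i. x \<in> G i}.
*)

lemma distributive_mslE:
  assumes "distributive_msl TYPE('a::semilattice_inf)" "inf (x::'a) y \<le> z"
  obtains x' y' where "x \<le> x'" "y \<le> y'" "inf x' y' = z"
  using assms unfolding distributive_msl_def by blast

lemma upsetD: "upset F \<Longrightarrow> x \<in> F \<Longrightarrow> x \<le> y \<Longrightarrow> y \<in> F"
  unfolding upset_def by blast

lemma upset_not_memD: "upset F \<Longrightarrow> x \<le> y \<Longrightarrow> y \<notin> F \<Longrightarrow> x \<notin> F"
  by (metis upsetD)

lemma inf_le_directed:
  assumes D: "distributive_msl TYPE('a::semilattice_inf)"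
    and au: "inf (a::'a) u \<le> c" and ab: "inf a b \<le> c"
  obtains w where "u \<le> w" "b \<le> w" "inf a w \<le> c"
proof -
  obtain a' b' where a': "a \<le> a'" and b': "b \<le> b'" and c: "inf a' b' = c"
    using distributive_mslE[OF D ab] .
  have "inf a u \<le> b'" using au c inf.cobounded2[of a' b'] by (metis order_trans)
  then obtain a'' u' where a'': "a \<le> a''" and u': "u \<le> u'" and b'_eq: "inf a'' u' = b'"
    using distributive_mslE[OF D] by blast
  have "b \<le> u'" using b' inf.cobounded2[of a'' u'] b'_eq by (metis order_trans)
  have "inf a u' \<le> b'" using inf_mono[OF a'' order_refl[of u']] b'_eq by simp
  then have "inf a u' \<le> c" using le_infI1[OF a', of u'] c by (metis le_inf_iff)
  with u' \<open>b \<le> u'\<close> show thesis by (rule that)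
qed

lemma inf_le_finite_upper_bound:
  assumes D: "distributive_msl TYPE('a::semilattice_inf)"
    and "finite A" and "\<forall>b\<in>A. inf (a::'a) b \<le> c"
  shows "\<exists>u. (\<forall>b\<in>A. b \<le> u) \<and> inf a u \<le> c"
  using assms(2,3)
proof (induction A rule: finite_induct)
  case empty
  show ?case by (intro exI[of _ c]) simp
next
  case (insert b A)
  then obtain u where u: "\<forall>b\<in>A. b \<le> u" "inf a u \<le> c" by auto
  obtain w where "u \<le> w" "b \<le> w" "inf a w \<le> c"
    using inf_le_directed[OF D u(2)] insert.prems by blast
  then show ?case using u by (auto intro: order_trans)
qed

lemma Inf_fin_image_fun_upd_insert:
  fixes f :: "'b \<Rightarrow> 'a::semilattice_inf"
  assumes "finite A" "A \<noteq> {}" "i \<notin> A"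
  shows "Inf_fin (f(i := x) ` insert i A) = inf x (Inf_fin (f ` A))"
proof -
  have "f(i := x) ` insert i A = insert x (f ` A)" using assms(3) by auto
  then show ?thesis using assms(1,2) by simp
qed

lemma Inf_fin_le_lift:
  assumes D: "distributive_msl TYPE('a::semilattice_inf)"
    and "finite I" "I \<noteq> {}" and "Inf_fin (g ` I) \<le> (w::'a)"
  shows "\<exists>y. (\<forall>i\<in>I. g i \<le> y i) \<and> Inf_fin (y ` I) = w"
  using assms(2-4)
proof (induction I arbitrary: w rule: finite_ne_induct)
  case (singleton i)
  then show ?case by (intro exI[of _ "\<lambda>_. w"]) simp
next
  case (insert i I)
  then have "inf (g i) (Inf_fin (g ` I)) \<le> w" by simp
  then obtain p q where pq: "g i \<le> p" "Inf_fin (g ` I) \<le> q" "inf p q = w"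
    using distributive_mslE[OF D] by blast
  obtain y where y: "\<forall>j\<in>I. g j \<le> y j" "Inf_fin (y ` I) = q"
    using insert.IH[OF pq(2)] by blast
  have "Inf_fin (y(i := p) ` insert i I) = w"
    unfolding Inf_fin_image_fun_upd_insert[OF insert.hyps(1-3)] y(2) pq(3) ..
  moreover have "\<forall>j\<in>insert i I. g j \<le> (y(i := p)) j" using y(1) pq(1) insert.hyps by auto
  ultimately show ?case by blast
qed

lemma pairwise_inf_le_obtain_upper_bounds:
  assumes D: "distributive_msl TYPE('a::semilattice_inf)"
    and "finite A" "A \<noteq> {}" and "pairwise (\<lambda>a b. inf a b \<le> (c::'a)) A"
  shows "\<exists>y. (\<forall>a\<in>A. \<forall>b\<in>A - {a}. b \<le> y a) \<and> Inf_fin (y ` A) \<le> c"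
  using assms(2-4)
proof (induction A rule: finite_ne_induct)
  case (singleton a)
  show ?case by (intro exI[of _ "\<lambda>_. c"]) simp
next
  case (insert a0 A)
  have pw: "pairwise (\<lambda>a b. inf a b \<le> c) A" and a0: "\<forall>b\<in>A. inf a0 b \<le> c"
    using insert.prems insert.hyps by (auto simp: pairwise_insert)
  obtain g where g: "\<forall>a\<in>A. \<forall>b\<in>A - {a}. b \<le> g a" "Inf_fin (g ` A) \<le> c"
    using insert.IH[OF pw] by blast
  obtain u where u: "\<forall>b\<in>A. b \<le> u" "inf a0 u \<le> c"
    using inf_le_finite_upper_bound[OF D insert.hyps(1) a0] by blast
  have "inf u a0 \<le> c" "inf u (Inf_fin (g ` A)) \<le> c"
    using u(2) g(2) by (simp_all add: inf_commute le_infI2)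
  then obtain w where w: "a0 \<le> w" "Inf_fin (g ` A) \<le> w" "inf u w \<le> c"
    using inf_le_directed[OF D] by metis
  obtain y where y: "\<forall>a\<in>A. g a \<le> y a" "Inf_fin (y ` A) = w"
    using Inf_fin_le_lift[OF D insert.hyps(1,2) w(2)] by blast
  have w_le: "w \<le> y a" if "a \<in> A" for a
    using Inf_fin.coboundedI[of "y ` A" "y a"] insert.hyps(1) that y(2) by simp
  have "Inf_fin (y(a0 := u) ` insert a0 A) \<le> c"
    unfolding Inf_fin_image_fun_upd_insert[OF insert.hyps(1-3)] y(2) by (rule w(3))
  moreover have "b \<le> (y(a0 := u)) a" if "a \<in> insert a0 A" "b \<in> insert a0 A - {a}" for a b
  proof (cases "a = a0")
    case True
    then show ?thesis using that u(1) by simp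
  next
    case False
    then have "a \<in> A" "(y(a0 := u)) a = y a" using that by auto
    moreover have "b \<le> y a"
      using that \<open>a \<in> A\<close> g(1) y(1) w(1) w_le by (cases "b = a0") (auto intro: order_trans)
    ultimately show ?thesis by simp
  qed
  ultimately show ?case by blast
qed

lemma prime_upset_finite_upper_bound:
  assumes "prime_upset F" and "finite P" "P \<noteq> {}" "P \<inter> F = {}"
  shows "\<exists>c. c \<notin> F \<and> (\<forall>p\<in>P. p \<le> c)"
  using assms(2-4)
proof (induction P rule: finite_ne_induct)
  case (singleton p)
  then show ?case by auto
next
  case (insert p P)
  then obtain c where c: "c \<notin> F" "\<forall>q\<in>P. q \<le> c" by auto
  obtain c' where "p \<le> c'" "c \<le> c'" "c' \<notin> F"
    using assms(1) c(1) insert.prems unfolding prime_upset_def by blast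
  then show ?case using c(2) by (auto intro: order_trans)
qed

lemma n_filterD:
  assumes "n_filter n F" "finite X" "X \<subseteq> F" "X \<noteq> {}"
    and "\<And>Y. Y \<noteq> {} \<Longrightarrow> Y \<subseteq> X \<Longrightarrow> card Y \<le> n \<Longrightarrow> Inf_fin Y \<in> F"
  shows "Inf_fin X \<in> F"
proof -
  have "X \<noteq> {} \<and> finite X \<and> X \<subseteq> F \<longrightarrow>
      (\<forall>Y. Y \<noteq> {} \<and> Y \<subseteq> X \<and> card Y \<le> n \<longrightarrow> Inf_fin Y \<in> F) \<longrightarrow> Inf_fin X \<in> F"
    using assms(1) unfolding n_filter_def by blast
  then show ?thesis using assms(2-5) by blast
qed

lemma n_filterI:
  assumes "upset F"
    and "\<And>X. finite X \<Longrightarrow> X \<subseteq> F \<Longrightarrow> X \<noteq> {} \<Longrightarrow>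
      (\<And>Y. Y \<noteq> {} \<Longrightarrow> Y \<subseteq> X \<Longrightarrow> card Y \<le> n \<Longrightarrow> Inf_fin Y \<in> F) \<Longrightarrow> Inf_fin X \<in> F"
  shows "n_filter n F"
  using assms unfolding n_filter_def by auto

lemma filter_msl_upset: "filter_msl G \<Longrightarrow> upset G"
  unfolding filter_msl_def n_filter_def by blast

lemma filter_msl_Inf_fin_mem:
  assumes "filter_msl G" "finite X" "X \<noteq> {}" "X \<subseteq> G"
  shows "Inf_fin X \<in> G"
proof -
  have "Inf_fin Y \<in> G" if "Y \<noteq> {}" "Y \<subseteq> X" "card Y \<le> 1" for Y
  proof -
    have "card Y = 1" using that finite_subset[OF _ \<open>finite X\<close>] by (simp add: le_Suc_eq)
    then obtain t where "Y = {t}" by (rule card_1_singletonE)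
    then show ?thesis using that(2) \<open>X \<subseteq> G\<close> by auto
  qed
  then show ?thesis using n_filterD[of 1 G X] assms unfolding filter_msl_def by blast
qed

lemma Inf_fin_mem_if_inf_closed:
  assumes closed: "\<And>x y. x \<in> G \<Longrightarrow> y \<in> G \<Longrightarrow> inf x y \<in> G"
    and "finite X" "X \<noteq> {}" "X \<subseteq> (G::'a::semilattice_inf set)"
  shows "Inf_fin X \<in> G"
  using assms(2-4)
proof (induction X rule: finite_ne_induct)
  case (singleton x)
  then show ?case by simp
next
  case (insert x X)
  then show ?case using closed by simp
qed

lemma filter_msl_iff:
  "filter_msl (G::'a::semilattice_inf set) \<longleftrightarrow>
     upset G \<and> (\<forall>x y. x \<in> G \<longrightarrow> y \<in> G \<longrightarrow> inf x y \<in> G)"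
proof
  assume G: "filter_msl G"
  have "inf x y \<in> G" if "x \<in> G" "y \<in> G" for x y
    using filter_msl_Inf_fin_mem[OF G, of "{x, y}"] that by simp
  then show "upset G \<and> (\<forall>x y. x \<in> G \<longrightarrow> y \<in> G \<longrightarrow> inf x y \<in> G)"
    using filter_msl_upset[OF G] by blast
next
  assume G: "upset G \<and> (\<forall>x y. x \<in> G \<longrightarrow> y \<in> G \<longrightarrow> inf x y \<in> G)"
  show "filter_msl G"
    unfolding filter_msl_def
  proof (rule n_filterI)
    show "upset G" using G ..
    fix X assume "finite X" "X \<subseteq> G" "X \<noteq> {}"
    then show "Inf_fin X \<in> G" using G by (intro Inf_fin_mem_if_inf_closed) auto
  qed
qed

definition separated :: "('a::semilattice_inf) set \<Rightarrow> 'a set \<Rightarrow> bool" where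
  "separated F A \<longleftrightarrow> finite A \<and> A \<subseteq> F \<and> pairwise (\<lambda>a b. inf a b \<notin> F) A"

lemma separated_obtain_upper_bounds:
  assumes D: "distributive_msl TYPE('a::semilattice_inf)" and P: "prime_upset F"
    and A: "separated F (A::'a set)" "2 \<le> card A"
  obtains y where "\<forall>a\<in>A. \<forall>b\<in>A - {a}. b \<le> y a" "y ` A \<subseteq> F" "Inf_fin (y ` A) \<notin> F"
proof -
  have fin: "finite A" and AF: "A \<subseteq> F" and pw: "pairwise (\<lambda>a b. inf a b \<notin> F) A"
    using A(1) unfolding separated_def by auto
  obtain a1 a2 where a12: "a1 \<in> A" "a2 \<in> A" "a1 \<noteq> a2"
    using A(2) by (metis card_le_Suc0_iff_eq fin not_less_eq_eq numeral_2_eq_2)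
  define M where "M = (\<lambda>(a, b). inf a b) ` (A \<times> A - Id)"
  have "finite M" "M \<noteq> {}" "M \<inter> F = {}"
    using fin a12 pw unfolding M_def pairwise_def by auto
  then obtain c where c: "c \<notin> F" "\<forall>m\<in>M. m \<le> c"
    using prime_upset_finite_upper_bound[OF P] by blast
  have "inf a b \<in> M" if "a \<in> A" "b \<in> A" "a \<noteq> b" for a b
    using that unfolding M_def by (auto intro!: image_eqI[of _ _ "(a, b)"])
  then have "pairwise (\<lambda>a b. inf a b \<le> c) A"
    using c(2) unfolding pairwise_def by blast
  then obtain y where y: "\<forall>a\<in>A. \<forall>b\<in>A - {a}. b \<le> y a" "Inf_fin (y ` A) \<le> c"
    using pairwise_inf_le_obtain_upper_bounds[OF D fin] a12 by blast
  have up: "upset F" using P unfolding prime_upset_def by blast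
  have "y a \<in> F" if "a \<in> A" for a
  proof -
    obtain b where "b \<in> A - {a}" using a12 by blast
    then have "b \<le> y a" "b \<in> F" using y(1) that AF by auto
    then show ?thesis using up by (blast intro: upsetD)
  qed
  moreover have "Inf_fin (y ` A) \<notin> F" using up y(2) c(1) by (rule upset_not_memD)
  ultimately show thesis using that y(1) by blast
qed

lemma card_separated_le:
  assumes D: "distributive_msl TYPE('a::semilattice_inf)" and "n \<ge> 1"
    and PF: "prime_n_filter n F" and A: "separated F (A::'a set)"
  shows "card A \<le> n"
proof (rule ccontr)
  assume "\<not> card A \<le> n"
  then have nA: "n < card A" and "2 \<le> card A" using \<open>n \<ge> 1\<close> by auto
  have nf: "n_filter n F" and up: "upset F"
    using PF unfolding prime_n_filter_def n_filter_def by auto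
  have fin: "finite A" and AF: "A \<subseteq> F" using A unfolding separated_def by auto
  obtain y where y: "\<forall>a\<in>A. \<forall>b\<in>A - {a}. b \<le> y a" "y ` A \<subseteq> F" "Inf_fin (y ` A) \<notin> F"
    using separated_obtain_upper_bounds[OF D _ A \<open>2 \<le> card A\<close>] PF
    unfolding prime_n_filter_def by blast
  have "Inf_fin (y ` A) \<in> F"
    using nf finite_imageI[OF fin] y(2)
  proof (rule n_filterD)
    show "y ` A \<noteq> {}" using \<open>2 \<le> card A\<close> by auto
  next
    fix Y assume Y: "Y \<noteq> {}" "Y \<subseteq> y ` A" "card Y \<le> n"
    obtain U where U: "U \<subseteq> A" "inj_on y U" "Y = y ` U"
      using Y(2) subset_image_inj by metis
    have "card U < card A" using card_image[OF U(2)] U(3) Y(3) nA by simp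
    then have "\<not> A \<subseteq> U" using card_mono[OF finite_subset[OF U(1) fin], of A] by linarith
    then obtain a where a: "a \<in> A" "a \<notin> U" by blast
    have "finite Y" using U fin finite_subset by blast
    moreover have "\<forall>t\<in>Y. a \<le> t" using U y(1) a by auto
    ultimately have "a \<le> Inf_fin Y" using Y(1) by (simp add: Inf_fin.bounded_iff)
    then show "Inf_fin Y \<in> F" using a AF up by (meson subsetD upsetD)
  qed
  with y(3) show False ..
qed

lemma separated_insert:
  assumes A: "separated F A" and "x \<in> F" and x: "\<forall>a\<in>A. inf x a \<notin> F"
  shows "separated F (insert x A)" "card (insert x A) = Suc (card A)"
proof -
  have "x \<notin> A" using x \<open>x \<in> F\<close> by auto
  then show "separated F (insert x A)"
    using A \<open>x \<in> F\<close> x unfolding separated_def by (auto simp: pairwise_insert inf_commute)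
  show "card (insert x A) = Suc (card A)"
    using \<open>x \<notin> A\<close> A unfolding separated_def by simp
qed

lemma separated_split:
  assumes up: "upset F" and A: "separated F A" and "a \<in> A"
    and pq: "p \<in> F" "q \<in> F" "p \<le> a" "q \<le> a" "inf p q \<notin> F"
  shows "separated F (insert p (insert q (A - {a})))"
    "card (insert p (insert q (A - {a}))) = Suc (card A)"
proof -
  have fin: "finite A" and AF: "A \<subseteq> F" and pw: "pairwise (\<lambda>a b. inf a b \<notin> F) A"
    using A unfolding separated_def by auto
  have "pairwise (\<lambda>a b. inf a b \<notin> F) (A - {a})" using pw by (rule pairwise_subset) blast
  then have A': "separated F (A - {a})" using fin AF unfolding separated_def by auto
  have below_a: "inf x b \<notin> F" if "x \<le> a" "b \<in> A - {a}" for x b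
  proof -
    have "inf a b \<notin> F" using pw that(2) \<open>a \<in> A\<close> unfolding pairwise_def by auto
    then show ?thesis using upset_not_memD[OF up inf_mono[OF that(1) order_refl]] by blast
  qed
  have Aq: "separated F (insert q (A - {a}))"
    and card_Aq: "card (insert q (A - {a})) = Suc (card (A - {a}))"
    using separated_insert[OF A' pq(2)] below_a pq(4) by auto
  have "\<forall>b\<in>insert q (A - {a}). inf p b \<notin> F" using below_a pq(3,5) by auto
  note insert_p = separated_insert[OF Aq pq(1) this]
  show "separated F (insert p (insert q (A - {a})))" by (rule insert_p(1))
  have "card (insert p (insert q (A - {a}))) = Suc (card (insert q (A - {a})))" by (rule insert_p(2))
  also have "\<dots> = Suc (card A)" by (simp only: card_Aq card_Suc_Diff1[OF fin \<open>a \<in> A\<close>])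
  finally show "card (insert p (insert q (A - {a}))) = Suc (card A)" .
qed

lemma maximal_separated_filters:
  assumes up: "upset F" and A: "separated F A"
    and max: "\<forall>B. separated F B \<longrightarrow> card B \<le> card A"
  shows "\<forall>a\<in>A. filter_msl {x. inf x a \<in> F}" "F = (\<Union>a\<in>A. {x. inf x a \<in> F})"
proof -
  show "\<forall>a\<in>A. filter_msl {x. inf x a \<in> F}"
    unfolding filter_msl_iff
  proof (intro ballI conjI allI impI)
    fix a assume "a \<in> A"
    show "upset {x. inf x a \<in> F}"
      unfolding upset_def
    proof (intro allI impI)
      fix x y assume "x \<in> {x. inf x a \<in> F}" "x \<le> y"
      then show "y \<in> {x. inf x a \<in> F}"
        using upsetD[OF up _ inf_mono[OF \<open>x \<le> y\<close> order_refl]] by simp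
    qed
    fix x z assume "x \<in> {x. inf x a \<in> F}" "z \<in> {x. inf x a \<in> F}"
    then have pq: "inf x a \<in> F" "inf z a \<in> F" by auto
    show "inf x z \<in> {x. inf x a \<in> F}"
    proof (rule ccontr)
      assume "inf x z \<notin> {x. inf x a \<in> F}"
      then have "inf (inf x a) (inf z a) \<notin> F" by (simp add: inf_aci)
      then have "card (insert (inf x a) (insert (inf z a) (A - {a}))) = Suc (card A)"
        "separated F (insert (inf x a) (insert (inf z a) (A - {a})))"
        using separated_split[OF up A \<open>a \<in> A\<close> pq] by simp_all
      then show False using max by (metis Suc_n_not_le_n)
    qed
  qed
  show "F = (\<Union>a\<in>A. {x. inf x a \<in> F})"
  proof
    show "(\<Union>a\<in>A. {x. inf x a \<in> F}) \<subseteq> F"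
      using up unfolding upset_def by auto
    show "F \<subseteq> (\<Union>a\<in>A. {x. inf x a \<in> F})"
    proof
      fix x assume "x \<in> F"
      show "x \<in> (\<Union>a\<in>A. {x. inf x a \<in> F})"
      proof (rule ccontr)
        assume "x \<notin> (\<Union>a\<in>A. {x. inf x a \<in> F})"
        then have "separated F (insert x A)" "card (insert x A) = Suc (card A)"
          using separated_insert[OF A \<open>x \<in> F\<close>] by auto
        then show False using max by (metis Suc_n_not_le_n)
      qed
    qed
  qed
qed

lemma prime_n_filter_Union_filters:
  assumes D: "distributive_msl TYPE('a::semilattice_inf)" and "n \<ge> 1"
    and PF: "prime_n_filter n (F::'a set)"
  shows "\<exists>\<F>. finite \<F> \<and> card \<F> \<le> n \<and> (\<forall>G\<in>\<F>. filter_msl G) \<and> F = \<Union>\<F>"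
proof -
  have up: "upset F" using PF unfolding prime_n_filter_def n_filter_def by blast
  have "separated F {}" unfolding separated_def by simp
  moreover have "\<forall>A. separated F A \<longrightarrow> card A < Suc n"
    using card_separated_le[OF D \<open>n \<ge> 1\<close> PF] by (simp add: less_Suc_eq_le)
  ultimately obtain A where A: "separated F A" and max: "\<forall>B. separated F B \<longrightarrow> card B \<le> card A"
    using ex_has_greatest_nat[of "separated F" "{}" card "Suc n"] by blast
  let ?G = "\<lambda>a. {x. inf x a \<in> F}"
  have "finite A" using A unfolding separated_def by blast
  then have "finite (?G ` A)" "card (?G ` A) \<le> n"
    using card_image_le[of A ?G] card_separated_le[OF D \<open>n \<ge> 1\<close> PF A] by simp_all
  with maximal_separated_filters[OF up A max] show ?thesis
    by (intro exI[of _ "?G ` A"] conjI) auto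
qed

lemma n_filter_Union_filters:
  assumes up: "upset (F::'a::semilattice_inf set)" and fin: "finite \<F>" and "card \<F> \<le> n"
    and fil: "\<forall>G\<in>\<F>. filter_msl G" and FU: "F = \<Union>\<F>"
  shows "n_filter n F"
proof (rule n_filterI[OF up])
  fix X assume X: "finite X" "X \<subseteq> F" "X \<noteq> {}"
  assume small: "\<And>Y. Y \<noteq> {} \<Longrightarrow> Y \<subseteq> X \<Longrightarrow> card Y \<le> n \<Longrightarrow> Inf_fin Y \<in> F"
  show "Inf_fin X \<in> F"
  proof (rule ccontr)
    assume notin: "Inf_fin X \<notin> F"
    have "\<exists>x. x \<in> X \<and> x \<notin> G" if "G \<in> \<F>" for G
    proof (rule ccontr)
      assume "\<not> (\<exists>x. x \<in> X \<and> x \<notin> G)"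
      then have "Inf_fin X \<in> G"
        using filter_msl_Inf_fin_mem[OF bspec[OF fil that] X(1,3)] by blast
      then show False using notin FU that by blast
    qed
    then obtain pick where pick: "\<forall>G\<in>\<F>. pick G \<in> X \<and> pick G \<notin> G"
      using bchoice[of \<F> "\<lambda>G x. x \<in> X \<and> x \<notin> G"] by blast
    have "\<F> \<noteq> {}" using X FU by auto
    then have "pick ` \<F> \<noteq> {}" "pick ` \<F> \<subseteq> X" "card (pick ` \<F>) \<le> n"
      using pick card_image_le[OF fin, of pick] \<open>card \<F> \<le> n\<close> by auto
    then have "Inf_fin (pick ` \<F>) \<in> F" by (rule small)
    then obtain G where G: "G \<in> \<F>" "Inf_fin (pick ` \<F>) \<in> G" using FU by blast
    have "Inf_fin (pick ` \<F>) \<le> pick G" using G(1) fin by (simp add: Inf_fin.coboundedI)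
    then have "pick G \<in> G" using upsetD[OF filter_msl_upset[OF bspec[OF fil G(1)]] G(2)] by blast
    then show False using pick G(1) by blast
  qed
qed

lemma msl_hom_2n_of_filters:
  assumes "k \<le> n" and "\<forall>i<k. filter_msl (f i)"
  shows "msl_hom_2n n (\<lambda>x. {i. i < k \<and> x \<in> f i})"
  using assms unfolding msl_hom_2n_def filter_msl_iff upset_def by auto

lemma filter_msl_msl_hom_2n_preimage:
  assumes "msl_hom_2n n h"
  shows "filter_msl {x. i \<in> h x}"
proof -
  have hom: "h (inf x y) = h x \<inter> h y" for x y using assms unfolding msl_hom_2n_def by blast
  have "h x \<subseteq> h y" if "x \<le> y" for x y
    using hom[of x y] inf.absorb1[OF that] by (metis Int_lower2)
  then show ?thesis unfolding filter_msl_iff upset_def using hom by blast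
qed

lemma Union_filters_iff_msl_hom_2n:
  "(\<exists>\<F>. finite \<F> \<and> card \<F> \<le> n \<and> (\<forall>G\<in>\<F>. filter_msl G) \<and> F = \<Union>\<F>) \<longleftrightarrow>
     (\<exists>h. msl_hom_2n n h \<and> F = {x::'a::semilattice_inf. h x \<noteq> {}})"
proof
  assume "\<exists>\<F>. finite \<F> \<and> card \<F> \<le> n \<and> (\<forall>G\<in>\<F>. filter_msl G) \<and> F = \<Union>\<F>"
  then obtain \<F> where \<F>: "finite \<F>" "card \<F> \<le> n" "\<forall>G\<in>\<F>. filter_msl G" "F = \<Union>\<F>" by blast
  define k where "k = card \<F>"
  obtain f where "bij_betw f {0..<k} \<F>"
    using ex_bij_betw_nat_finite[OF \<F>(1)] unfolding k_def by blast
  then have \<F>_eq: "\<F> = f ` {0..<k}" by (simp add: bij_betw_def)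
  then have "\<forall>i<k. filter_msl (f i)" using \<F>(3) by auto
  moreover have "F = {x. {i. i < k \<and> x \<in> f i} \<noteq> {}}"
    using \<F>(4) \<F>_eq by auto
  moreover have "k \<le> n" using \<F>(2) unfolding k_def .
  ultimately show "\<exists>h. msl_hom_2n n h \<and> F = {x. h x \<noteq> {}}"
    using msl_hom_2n_of_filters by blast
next
  assume "\<exists>h. msl_hom_2n n h \<and> F = {x. h x \<noteq> {}}"
  then obtain h where h: "msl_hom_2n n h" "F = {x. h x \<noteq> {}}" by blast
  let ?\<F> = "(\<lambda>i. {x. i \<in> h x}) ` {..<n}"
  have "F = \<Union>?\<F>" using h unfolding msl_hom_2n_def by blast
  moreover have "card ?\<F> \<le> n" using card_image_le[of "{..<n}"] by fastforce
  ultimately show "\<exists>\<F>. finite \<F> \<and> card \<F> \<le> n \<and> (\<forall>G\<in>\<F>. filter_msl G) \<and> F = \<Union>\<F>"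
    using filter_msl_msl_hom_2n_preimage[OF h(1)] by blast
qed

theorem mainTheorem6:
  fixes F :: "('a::semilattice_inf) set" and n :: nat
  assumes "distributive_msl TYPE('a)"
    and "n \<ge> 1"
    and "upset F"
  shows "(prime_n_filter n F \<longleftrightarrow>
           (prime_upset F \<and> (\<exists>\<F>. finite \<F> \<and> card \<F> \<le> n \<and> (\<forall>G\<in>\<F>. filter_msl G) \<and> F = \<Union>\<F>)))
       \<and> ((prime_upset F \<and> (\<exists>\<F>. finite \<F> \<and> card \<F> \<le> n \<and> (\<forall>G\<in>\<F>. filter_msl G) \<and> F = \<Union>\<F>))
           \<longleftrightarrow> (prime_upset F \<and> (\<exists>h. msl_hom_2n n h \<and> F = {x. h x \<noteq> {}})))"
proof -
  have "prime_n_filter n F \<longleftrightarrow>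
      prime_upset F \<and> (\<exists>\<F>. finite \<F> \<and> card \<F> \<le> n \<and> (\<forall>G\<in>\<F>. filter_msl G) \<and> F = \<Union>\<F>)"
    (is "_ \<longleftrightarrow> _ \<and> ?union")
  proof
    assume "prime_n_filter n F"
    then show "prime_upset F \<and> ?union"
      using prime_n_filter_Union_filters[OF assms(1,2)] unfolding prime_n_filter_def by blast
  next
    assume "prime_upset F \<and> ?union"
    then show "prime_n_filter n F"
      using n_filter_Union_filters[OF assms(3)] unfolding prime_n_filter_def by blast
  qed
  then show ?thesis using Union_filters_iff_msl_hom_2n[of n F] by simp
qed

end
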